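(* Let $X$ be a locally compact space and $K\subset X$ quasi-compact. Then $L=\{S\in\mathcal{H}X: S\cap K\neq\emptyset\}$ is compact. The space $\mathcal{H}X$ is locally compact, and it is $\sigma$-compact if $X$ is $\sigma$-compact.
   Context: Quasi-compact: every open cover has a finite subcover; compact: quasi-compact Hausdorff; locally compact: every point has a compact neighbourhood (not necessarily Hausdorff); $\sigma$-compact: countable union of compact sets. $\mathcal{H}X$ is the set of nonempty $S\subset X$ such that for every finite family $(V_i)$ of open sets with $S\cap V_i\neq\emptyset$ for all $i$, $\bigcap_iV_i\neq\emptyset$. It is topologized as a subspace of $\hat{\mathcal{H}}X=\mathcal{H}X\cup\{\emptyset\}$, whose topology is generated by the sets $\{S: S\cap V\neq\emptyset\}$ ($V$ open in $X$) and $\{S: S\cap Q=\emptyset\}$ ($Q$ quasi-compact in $X$). *)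

theory Defs
  imports "HOL-Analysis.Analysis"
begin

text \<open>Paper's convention: "compact" = quasi-compact and Hausdorff (as a subspace).
  Library \<open>compactin\<close> is quasi-compactness.\<close>
definition hcompactin :: "'a topology \<Rightarrow> 'a set \<Rightarrow> bool" where
  "hcompactin X K \<longleftrightarrow> compactin X K \<and> Hausdorff_space (subtopology X K)"

definition lc_space :: "'a topology \<Rightarrow> bool" where
  "lc_space X \<longleftrightarrow> (\<forall>x\<in>topspace X. \<exists>U N. openin X U \<and> x \<in> U \<and> U \<subseteq> N \<and> hcompactin X N)"

definition sigma_compact_space :: "'a topology \<Rightarrow> bool" where
  "sigma_compact_space X \<longleftrightarrow>
     (\<exists>\<F>. countable \<F> \<and> (\<forall>K\<in>\<F>. hcompactin X K) \<and> \<Union>\<F> = topspace X)"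

definition HX :: "'a topology \<Rightarrow> 'a set set" where
  "HX X = {S. S \<noteq> {} \<and> S \<subseteq> topspace X \<and>
      (\<forall>\<V>. finite \<V> \<and> (\<forall>V\<in>\<V>. openin X V \<and> S \<inter> V \<noteq> {})
            \<longrightarrow> topspace X \<inter> \<Inter>\<V> \<noteq> {})}"

definition HXhat_top :: "'a topology \<Rightarrow> 'a set topology" where
  "HXhat_top X = topology_generated_by
     ({{S \<in> insert {} (HX X). S \<inter> V \<noteq> {}} | V. openin X V} \<union>
      {{S \<in> insert {} (HX X). S \<inter> Q = {}} | Q. compactin X Q})"

definition HX_top :: "'a topology \<Rightarrow> 'a set topology" where
  "HX_top X = subtopology (HXhat_top X) (HX X)"

end

theory Submission
  imports Defs
begin

text \<open>
  Compactness of \<open>L\<close> is proved with ultrafilters.  An ultrafilter \<open>F\<close> on \<open>L\<close> converges to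
  its Kuratowski lower limit \<open>T\<close>, the set of points each of whose neighbourhoods eventually
  meets the members of \<open>F\<close>: \<open>T\<close> belongs to \<open>\<H>X\<close> because the members of \<open>F\<close> do, and since \<open>F\<close>
  is ultra, every quasi-compact set missing \<open>T\<close> is eventually missed (covering it by finitely
  many open sets that are eventually missed), which gives both \<open>T \<inter> K \<noteq> {}\<close> and convergence
  on the subbasic open sets.  No local compactness is needed for this part.

  Local compactness enters through the Hausdorff property.  A member of \<open>\<H>X\<close> meets every
  Hausdorff open set in at most one point, so it is closed; hence for \<open>x \<in> S - T\<close> there are an
  open \<open>V \<ni> x\<close> and a compact \<open>Q \<supseteq> V\<close> missing \<open>T\<close>, and the open sets
  \<open>{R. R \<inter> V \<noteq> {}}\<close> and \<open>{R. R \<inter> Q = {}}\<close> separate \<open>S\<close> from \<open>T\<close>.  The same compact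
  neighbourhoods \<open>Q\<close>, through the compact sets \<open>{R. R \<inter> Q \<noteq> {}}\<close>, give local compactness
  and, for \<open>\<sigma>\<close>-compact \<open>X\<close>, a countable compact cover of \<open>\<H>X\<close>.
\<close>

definition ultrafilter :: "'a filter \<Rightarrow> bool" where
  "ultrafilter F \<longleftrightarrow> F \<noteq> bot \<and> (\<forall>P. eventually P F \<or> eventually (\<lambda>x. \<not> P x) F)"

definition finite_intersection_property :: "'a set set \<Rightarrow> bool" where
  "finite_intersection_property \<C> \<longleftrightarrow> (\<forall>\<F>. finite \<F> \<and> \<F> \<subseteq> \<C> \<longrightarrow> \<Inter>\<F> \<noteq> {})"

lemma maximal_finite_intersection_property_family:
  assumes "finite_intersection_property \<C>"
  obtains \<M> where "\<C> \<subseteq> \<M>" "finite_intersection_property \<M>"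
    "\<And>A. finite_intersection_property (insert A \<M>) \<Longrightarrow> A \<in> \<M>"
proof -
  define \<A> where "\<A> = {\<M>. \<C> \<subseteq> \<M> \<and> finite_intersection_property \<M>}"
  have "\<forall>Ch\<in>chains \<A>. \<exists>\<U>\<in>\<A>. \<forall>\<M>\<in>Ch. \<M> \<subseteq> \<U>"
  proof
    fix Ch assume Ch: "Ch \<in> chains \<A>"
    show "\<exists>\<U>\<in>\<A>. \<forall>\<M>\<in>Ch. \<M> \<subseteq> \<U>"
    proof (cases "Ch = {}")
      case True
      then show ?thesis using assms by (auto simp: \<A>_def)
    next
      case False
      have "finite_intersection_property (\<Union>Ch)"
        unfolding finite_intersection_property_def
      proof (intro allI impI)
        fix \<F> assume \<F>: "finite \<F> \<and> \<F> \<subseteq> \<Union>Ch"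
        have "subset.chain \<A> Ch" using Ch by (simp add: chains_alt_def)
        then obtain \<M> where "\<M> \<in> Ch" "\<F> \<subseteq> \<M>"
          using finite_subset_Union_chain[OF _ _ False] \<F> by metis
        then show "\<Inter>\<F> \<noteq> {}"
          using Ch \<F> by (auto simp: chains_def \<A>_def finite_intersection_property_def)
      qed
      moreover have "\<C> \<subseteq> \<Union>Ch" using False Ch by (auto simp: \<A>_def chains_def)
      ultimately show ?thesis by (auto simp: \<A>_def)
    qed
  qed
  from Zorn_Lemma2[OF this] obtain \<M>
    where \<M>: "\<M> \<in> \<A>" and max: "\<And>\<N>. \<N> \<in> \<A> \<Longrightarrow> \<M> \<subseteq> \<N> \<Longrightarrow> \<N> = \<M>"
    by blast
  show thesis
  proof (rule that)
    show "\<C> \<subseteq> \<M>" "finite_intersection_property \<M>"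
      using \<M> by (simp_all add: \<A>_def)
    show "A \<in> \<M>" if "finite_intersection_property (insert A \<M>)" for A
      using max[of "insert A \<M>"] that \<M> unfolding \<A>_def by blast
  qed
qed

lemma eventually_INF_principal_iff:
  "eventually P (INF A\<in>\<M>. principal A) \<longleftrightarrow> (\<exists>\<F>\<subseteq>\<M>. finite \<F> \<and> (\<forall>x\<in>\<Inter>\<F>. P x))"
proof -
  have "eventually P (INF A\<in>\<F>. principal A) \<longleftrightarrow> (\<forall>x\<in>\<Inter>\<F>. P x)" if "finite \<F>" for \<F>
    using INF_principal_finite[OF that, of "\<lambda>A. A"] by (simp add: eventually_principal)
  then show ?thesis
    unfolding eventually_INF[of _ _ \<M>] by meson
qed

lemma ultrafilter_extending_finite_intersection_property:
  assumes "finite_intersection_property \<C>"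
  shows "\<exists>F. ultrafilter F \<and> (\<forall>A\<in>\<C>. eventually (\<lambda>x. x \<in> A) F)"
proof (rule maximal_finite_intersection_property_family[OF assms])
  fix \<M> assume "\<C> \<subseteq> \<M>" and fip: "finite_intersection_property \<M>"
    and max: "\<And>A. finite_intersection_property (insert A \<M>) \<Longrightarrow> A \<in> \<M>"
  define F where "F = (INF A\<in>\<M>. principal A)"
  have in_F: "eventually (\<lambda>x. x \<in> A) F" if "A \<in> \<M>" for A
    unfolding F_def eventually_INF_principal_iff using that by (intro exI[of _ "{A}"]) auto
  have "F \<noteq> bot"
  proof
    assume "F = bot"
    then have "eventually (\<lambda>x. False) F" by simp
    then obtain \<F> where "\<F> \<subseteq> \<M>" "finite \<F>" "\<forall>x\<in>\<Inter>\<F>. False"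
      unfolding F_def eventually_INF_principal_iff by blast
    with fip show False unfolding finite_intersection_property_def by blast
  qed
  moreover have "eventually P F \<or> eventually (\<lambda>x. \<not> P x) F" for P
  proof (cases "{x. P x} \<in> \<M>")
    case True
    then show ?thesis using in_F[OF True] by simp
  next
    case False
    then have "\<not> finite_intersection_property (insert {x. P x} \<M>)"
      using max by blast
    then obtain \<F> where \<F>: "finite \<F>" "\<F> \<subseteq> insert {x. P x} \<M>" "\<Inter>\<F> = {}"
      unfolding finite_intersection_property_def by blast
    have "eventually (\<lambda>x. \<not> P x) F"
      unfolding F_def eventually_INF_principal_iff
      using \<F> by (intro exI[of _ "\<F> - {{x. P x}}"]) auto
    then show ?thesis ..
  qed
  ultimately have "ultrafilter F"
    unfolding ultrafilter_def by (intro conjI allI)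
  then show ?thesis
    using in_F \<open>\<C> \<subseteq> \<M>\<close> by blast
qed

lemma ultrafilter_eventually_or_not:
  "ultrafilter F \<Longrightarrow> eventually P F \<or> eventually (\<lambda>x. \<not> P x) F"
  by (simp add: ultrafilter_def)

lemma compactin_if_ultrafilters_converge:
  assumes "L \<subseteq> topspace Y"
    and converge: "\<And>F. ultrafilter F \<Longrightarrow> eventually (\<lambda>x. x \<in> L) F \<Longrightarrow> \<exists>y\<in>L. limitin Y (\<lambda>x. x) y F"
  shows "compactin Y L"
  unfolding compactin_def
proof (intro conjI allI impI)
  show "L \<subseteq> topspace Y" by fact
  fix \<U> assume "(\<forall>U\<in>\<U>. openin Y U) \<and> L \<subseteq> \<Union>\<U>"
  then have opens: "\<forall>U\<in>\<U>. openin Y U" and cover: "L \<subseteq> \<Union>\<U>" by auto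
  show "\<exists>\<F>. finite \<F> \<and> \<F> \<subseteq> \<U> \<and> L \<subseteq> \<Union>\<F>"
  proof (rule ccontr)
    assume no_finite_subcover: "\<nexists>\<F>. finite \<F> \<and> \<F> \<subseteq> \<U> \<and> L \<subseteq> \<Union>\<F>"
    define \<C> where "\<C> = insert L ((\<lambda>U. L - U) ` \<U>)"
    have "finite_intersection_property \<C>"
      unfolding finite_intersection_property_def
    proof (intro allI impI)
      fix \<F> assume \<F>: "finite \<F> \<and> \<F> \<subseteq> \<C>"
      then obtain \<V> where \<V>: "finite \<V>" "\<V> \<subseteq> \<U>" "\<F> - {L} = (\<lambda>U. L - U) ` \<V>"
        unfolding \<C>_def by (metis Diff_subset_conv finite_Diff finite_subset_image insert_is_Un)
      then obtain S where "S \<in> L" "S \<notin> \<Union>\<V>"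
        using no_finite_subcover by blast
      then have "S \<in> \<Inter>\<F>"
        using \<V>(3) by blast
      then show "\<Inter>\<F> \<noteq> {}" by blast
    qed
    then obtain F where F: "ultrafilter F" "\<forall>A\<in>\<C>. eventually (\<lambda>x. x \<in> A) F"
      using ultrafilter_extending_finite_intersection_property by blast
    then obtain y where "y \<in> L" and y: "limitin Y (\<lambda>x. x) y F"
      using converge by (auto simp: \<C>_def)
    then obtain U where "U \<in> \<U>" "y \<in> U"
      using cover by blast
    then have "eventually (\<lambda>x. x \<in> U) F"
      using limitinD[OF y] opens by blast
    moreover have "eventually (\<lambda>x. x \<in> L - U) F"
      using F(2) \<open>U \<in> \<U>\<close> by (simp add: \<C>_def)
    ultimately have "eventually (\<lambda>x. False) F"
      by (rule eventually_elim2) simp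
    with F(1) show False
      by (simp add: ultrafilter_def)
  qed
qed

lemma eventually_in_generated_open:
  assumes "generate_topology_on \<S> W" "x \<in> W"
    and basic: "\<And>B. B \<in> \<S> \<Longrightarrow> x \<in> B \<Longrightarrow> eventually (\<lambda>y. f y \<in> B) F"
  shows "eventually (\<lambda>y. f y \<in> W) F"
  using assms(1,2)
proof (induction rule: generate_topology_on.induct)
  case Empty
  then show ?case by simp
next
  case (Int a b)
  then show ?case by (simp add: eventually_conj)
next
  case (UN K)
  then obtain k where "k \<in> K" "x \<in> k" by blast
  with UN.IH have "eventually (\<lambda>y. f y \<in> k) F" by blast
  then show ?case
    by (rule eventually_mono) (use \<open>k \<in> K\<close> in blast)
next
  case (Basis s)
  then show ?case by (rule basic)
qed

lemma limitin_topology_generated_by: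
  assumes "x \<in> \<Union>\<S>"
    and "\<And>B. B \<in> \<S> \<Longrightarrow> x \<in> B \<Longrightarrow> eventually (\<lambda>y. f y \<in> B) F"
  shows "limitin (topology_generated_by \<S>) f x F"
proof -
  have "eventually (\<lambda>y. f y \<in> U) F" if "generate_topology_on \<S> U" "x \<in> U" for U
    by (rule eventually_in_generated_open[OF that assms(2)])
  then show ?thesis
    using assms(1) by (simp add: limitin_def openin_topology_generated_by_iff)
qed

lemma topspace_HXhat_top: "topspace (HXhat_top X) = insert {} (HX X)"
proof -
  let ?meet = "{{S \<in> insert {} (HX X). S \<inter> V \<noteq> {}} | V. openin X V}"
  let ?miss = "{{S \<in> insert {} (HX X). S \<inter> Q = {}} | Q. compactin X Q}"
  have "insert {} (HX X) \<in> ?miss"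
    by (intro CollectI exI[of _ "{}"] conjI) auto
  then have "insert {} (HX X) \<subseteq> \<Union>(?meet \<union> ?miss)"
    by blast
  moreover have "\<Union>(?meet \<union> ?miss) \<subseteq> insert {} (HX X)"
    by blast
  ultimately show ?thesis
    unfolding HXhat_top_def topology_generated_by_topspace by (rule antisym[rotated])
qed

lemma topspace_HX_top [simp]: "topspace (HX_top X) = HX X"
  by (auto simp: HX_top_def topspace_HXhat_top)

lemma openin_HX_top_meeting:
  assumes "openin X V"
  shows "openin (HX_top X) {S \<in> HX X. S \<inter> V \<noteq> {}}"
proof -
  have "openin (HXhat_top X) {S \<in> insert {} (HX X). S \<inter> V \<noteq> {}}"
    unfolding HXhat_top_def openin_topology_generated_by_iff
    using assms by (intro generate_topology_on.Basis) blast
  then show ?thesis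
    unfolding HX_top_def openin_subtopology by blast
qed

lemma openin_HX_top_missing:
  assumes "compactin X Q"
  shows "openin (HX_top X) {S \<in> HX X. S \<inter> Q = {}}"
proof -
  have "openin (HXhat_top X) {S \<in> insert {} (HX X). S \<inter> Q = {}}"
    unfolding HXhat_top_def openin_topology_generated_by_iff
    using assms by (intro generate_topology_on.Basis) blast
  then show ?thesis
    unfolding HX_top_def openin_subtopology by blast
qed

lemma limitin_HX_top:
  assumes "T \<in> HX X" and "eventually (\<lambda>S. S \<in> HX X) F"
    and meets: "\<And>V. openin X V \<Longrightarrow> T \<inter> V \<noteq> {} \<Longrightarrow> eventually (\<lambda>S. S \<inter> V \<noteq> {}) F"
    and misses: "\<And>Q. compactin X Q \<Longrightarrow> T \<inter> Q = {} \<Longrightarrow> eventually (\<lambda>S. S \<inter> Q = {}) F"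
  shows "limitin (HX_top X) (\<lambda>S. S) T F"
proof -
  have "limitin (HXhat_top X) (\<lambda>S. S) T F"
    unfolding HXhat_top_def
  proof (rule limitin_topology_generated_by)
    show "T \<in> \<Union>({{S \<in> insert {} (HX X). S \<inter> V \<noteq> {}} | V. openin X V} \<union>
                 {{S \<in> insert {} (HX X). S \<inter> Q = {}} | Q. compactin X Q})"
      using assms(1) by blast
    fix B assume "B \<in> {{S \<in> insert {} (HX X). S \<inter> V \<noteq> {}} | V. openin X V} \<union>
                      {{S \<in> insert {} (HX X). S \<inter> Q = {}} | Q. compactin X Q}"
      and "T \<in> B"
    then consider V where "openin X V" "T \<inter> V \<noteq> {}" "B = {S \<in> insert {} (HX X). S \<inter> V \<noteq> {}}"
      | Q where "compactin X Q" "T \<inter> Q = {}" "B = {S \<in> insert {} (HX X). S \<inter> Q = {}}"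
      by blast
    then show "eventually (\<lambda>S. S \<in> B) F"
    proof cases
      case 1
      have "eventually (\<lambda>S. S \<in> HX X \<and> S \<inter> V \<noteq> {}) F"
        using assms(2) meets[OF 1(1,2)] by (rule eventually_conj)
      then show ?thesis
        by (rule eventually_mono) (simp add: 1(3))
    next
      case 2
      have "eventually (\<lambda>S. S \<in> HX X \<and> S \<inter> Q = {}) F"
        using assms(2) misses[OF 2(1,2)] by (rule eventually_conj)
      then show ?thesis
        by (rule eventually_mono) (simp add: 2(3))
    qed
  qed
  then show ?thesis
    using assms(1,2) by (simp add: HX_top_def limitin_subtopology)
qed

lemma HX_Inter_nonempty:
  assumes "S \<in> HX X" "finite \<V>" "\<And>V. V \<in> \<V> \<Longrightarrow> openin X V \<and> S \<inter> V \<noteq> {}"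
  shows "topspace X \<inter> \<Inter>\<V> \<noteq> {}"
  using assms unfolding HX_def by blast

definition kuratowski_liminf :: "'a topology \<Rightarrow> 'a set filter \<Rightarrow> 'a set" where
  "kuratowski_liminf X F =
     {y \<in> topspace X. \<forall>B. openin X B \<and> y \<in> B \<longrightarrow> eventually (\<lambda>S. S \<inter> B \<noteq> {}) F}"

lemma eventually_disjoint_if_disjoint_kuratowski_liminf:
  assumes "ultrafilter F" and Q: "compactin X Q" "Q \<inter> kuratowski_liminf X F = {}"
  shows "eventually (\<lambda>S. S \<inter> Q = {}) F"
proof -
  have "\<exists>B. openin X B \<and> y \<in> B \<and> eventually (\<lambda>S. S \<inter> B = {}) F" if "y \<in> Q" for y
  proof -
    have "y \<in> topspace X" "y \<notin> kuratowski_liminf X F"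
      using that Q compactin_subset_topspace by blast+
    then obtain B where "openin X B" "y \<in> B" "\<not> eventually (\<lambda>S. S \<inter> B \<noteq> {}) F"
      unfolding kuratowski_liminf_def by blast
    moreover have "eventually (\<lambda>S. S \<inter> B \<noteq> {}) F \<or> eventually (\<lambda>S. S \<inter> B = {}) F"
      using ultrafilter_eventually_or_not[OF \<open>ultrafilter F\<close>, of "\<lambda>S. S \<inter> B \<noteq> {}"] by simp
    ultimately show ?thesis by blast
  qed
  then obtain B where B: "\<And>y. y \<in> Q \<Longrightarrow> openin X (B y) \<and> y \<in> B y \<and> eventually (\<lambda>S. S \<inter> B y = {}) F"
    by metis
  have "\<exists>\<F>. finite \<F> \<and> \<F> \<subseteq> B ` Q \<and> Q \<subseteq> \<Union>\<F>"
    using Q(1) unfolding compactin_def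
    by (elim conjE allE[of _ "B ` Q"] impE) (use B in blast)+
  then obtain Q' where Q': "finite Q'" "Q' \<subseteq> Q" "Q \<subseteq> \<Union>(B ` Q')"
    by (metis finite_subset_image)
  have "eventually (\<lambda>S. \<forall>y\<in>Q'. S \<inter> B y = {}) F"
    by (rule eventually_ball_finite[OF Q'(1)]) (use B Q'(2) in blast)
  then show ?thesis
    by (rule eventually_mono) (use Q'(3) in blast)
qed

lemma kuratowski_liminf_in_HX:
  assumes "F \<noteq> bot" and "eventually (\<lambda>S. S \<in> HX X) F" and "kuratowski_liminf X F \<noteq> {}"
  shows "kuratowski_liminf X F \<in> HX X"
  unfolding HX_def
proof (intro CollectI conjI allI impI)
  show "kuratowski_liminf X F \<noteq> {}" "kuratowski_liminf X F \<subseteq> topspace X"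
    using assms(3) by (auto simp: kuratowski_liminf_def)
  fix \<V> assume \<V>: "finite \<V> \<and> (\<forall>V\<in>\<V>. openin X V \<and> kuratowski_liminf X F \<inter> V \<noteq> {})"
  then have "\<forall>V\<in>\<V>. eventually (\<lambda>S. S \<inter> V \<noteq> {}) F"
    by (auto simp: kuratowski_liminf_def)
  then have "eventually (\<lambda>S. S \<in> HX X \<and> (\<forall>V\<in>\<V>. S \<inter> V \<noteq> {})) F"
    using \<V> assms(2) by (simp add: eventually_ball_finite eventually_conj)
  then obtain S where "S \<in> HX X" "\<forall>V\<in>\<V>. S \<inter> V \<noteq> {}"
    using eventually_happens'[OF assms(1)] by blast
  then show "topspace X \<inter> \<Inter>\<V> \<noteq> {}"
    using \<V> by (intro HX_Inter_nonempty[OF \<open>S \<in> HX X\<close>]) auto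
qed

lemma limitin_kuratowski_liminf:
  assumes "ultrafilter F" and "eventually (\<lambda>S. S \<in> HX X) F"
    and "kuratowski_liminf X F \<in> HX X"
  shows "limitin (HX_top X) (\<lambda>S. S) (kuratowski_liminf X F) F"
proof (rule limitin_HX_top[OF assms(3,2)])
  show "eventually (\<lambda>S. S \<inter> V \<noteq> {}) F"
    if "openin X V" "kuratowski_liminf X F \<inter> V \<noteq> {}" for V
    using that by (auto simp: kuratowski_liminf_def)
  show "eventually (\<lambda>S. S \<inter> Q = {}) F"
    if "compactin X Q" "kuratowski_liminf X F \<inter> Q = {}" for Q
    using eventually_disjoint_if_disjoint_kuratowski_liminf[OF assms(1) that(1)] that(2) by blast
qed

lemma compactin_HX_meeting:
  assumes K: "compactin X K"
  shows "compactin (HX_top X) {S \<in> HX X. S \<inter> K \<noteq> {}}"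
proof (rule compactin_if_ultrafilters_converge)
  show "{S \<in> HX X. S \<inter> K \<noteq> {}} \<subseteq> topspace (HX_top X)" by auto
  fix F assume F: "ultrafilter F" and in_L: "eventually (\<lambda>S. S \<in> {S \<in> HX X. S \<inter> K \<noteq> {}}) F"
  define T where "T = kuratowski_liminf X F"
  have "F \<noteq> bot" using F by (simp add: ultrafilter_def)
  have "T \<inter> K \<noteq> {}"
  proof
    assume "T \<inter> K = {}"
    then have "eventually (\<lambda>S. S \<inter> K = {}) F"
      using eventually_disjoint_if_disjoint_kuratowski_liminf[OF F K] by (simp add: T_def Int_commute)
    with in_L have "eventually (\<lambda>S. False) F"
      by (rule eventually_elim2) auto
    with \<open>F \<noteq> bot\<close> show False by simp
  qed
  moreover have "eventually (\<lambda>S. S \<in> HX X) F"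
    using in_L by (rule eventually_mono) simp
  ultimately have "T \<in> HX X"
    unfolding T_def using kuratowski_liminf_in_HX[OF \<open>F \<noteq> bot\<close>] by blast
  with \<open>T \<inter> K \<noteq> {}\<close> show "\<exists>T\<in>{S \<in> HX X. S \<inter> K \<noteq> {}}. limitin (HX_top X) (\<lambda>S. S) T F"
    using limitin_kuratowski_liminf[OF F \<open>eventually (\<lambda>S. S \<in> HX X) F\<close>] unfolding T_def by blast
qed

lemma HX_Int_Hausdorff_open_subsingleton:
  assumes "S \<in> HX X" "openin X U" "Hausdorff_space (subtopology X U)"
    and "a \<in> S \<inter> U" "b \<in> S \<inter> U"
  shows "a = b"
proof (rule ccontr)
  assume "a \<noteq> b"
  moreover have "a \<in> topspace (subtopology X U)" "b \<in> topspace (subtopology X U)"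
    using assms(2,4,5) openin_subset by auto
  ultimately obtain A B where "openin (subtopology X U) A" "openin (subtopology X U) B"
      and AB: "a \<in> A" "b \<in> B" "disjnt A B"
    using assms(3) unfolding Hausdorff_space_def by blast
  then have "openin X A" "openin X B"
    using openin_trans_full assms(2) by blast+
  then have "topspace X \<inter> \<Inter>{A, B} \<noteq> {}"
    using assms(1,4,5) AB by (intro HX_Inter_nonempty) auto
  with AB(3) show False
    by (auto simp: disjnt_def)
qed

lemma lc_space_Hausdorff_neighbourhood:
  assumes "lc_space X" "x \<in> topspace X"
  shows "\<exists>U. openin X U \<and> x \<in> U \<and> Hausdorff_space (subtopology X U)"
proof -
  obtain U N where U: "openin X U" "x \<in> U" "U \<subseteq> N" and N: "hcompactin X N"
    using assms unfolding lc_space_def by blast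
  have "Hausdorff_space (subtopology X U)"
    using N Hausdorff_space_subtopology[of "subtopology X N" U] U(3)
    by (simp add: hcompactin_def subtopology_subtopology Int_absorb1)
  with U(1,2) show ?thesis by blast
qed

lemma closedin_HX:
  assumes locally_Hausdorff:
      "\<And>x. x \<in> topspace X \<Longrightarrow> \<exists>U. openin X U \<and> x \<in> U \<and> Hausdorff_space (subtopology X U)"
    and "S \<in> HX X"
  shows "closedin X S"
proof -
  have "\<exists>W. openin X W \<and> x \<in> W \<and> W \<subseteq> topspace X - S" if x: "x \<in> topspace X - S" for x
  proof -
    obtain U where U: "openin X U" "x \<in> U" and HU: "Hausdorff_space (subtopology X U)"
      using locally_Hausdorff x by blast
    have "finite (S \<inter> U)"
    proof (cases "S \<inter> U = {}")
      case False
      then obtain a where "a \<in> S \<inter> U" by blast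
      then have "S \<inter> U \<subseteq> {a}"
        using HX_Int_Hausdorff_open_subsingleton[OF assms(2) U(1) HU] by blast
      then show ?thesis using finite_subset by blast
    qed simp
    moreover have "S \<inter> U \<subseteq> topspace (subtopology X U)"
      using assms(2) by (auto simp: HX_def)
    moreover have "t1_space (subtopology X U)"
      using HU by (rule Hausdorff_imp_t1_space)
    ultimately have "closedin (subtopology X U) (S \<inter> U)"
      using t1_space_closedin_finite by blast
    moreover have "topspace (subtopology X U) - S \<inter> U = U - S"
      using openin_subset[OF U(1)] by auto
    ultimately have "openin (subtopology X U) (U - S)"
      by (metis closedin_def)
    then have "openin X (U - S)"
      using U(1) openin_trans_full by blast
    then show ?thesis
      using U(1,2) x openin_subset by blast
  qed
  then have "openin X (topspace X - S)"
    by (subst openin_subopen) blast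
  then show ?thesis
    using assms(2) by (simp add: closedin_def HX_def)
qed

lemma lc_space_compact_neighbourhood:
  assumes "lc_space X" and W: "openin X W" "x \<in> W"
  shows "\<exists>V Q. openin X V \<and> compactin X Q \<and> x \<in> V \<and> V \<subseteq> Q \<and> Q \<subseteq> W"
proof -
  have "x \<in> topspace X"
    using W openin_subset by blast
  then obtain U N where U: "openin X U" "x \<in> U" "U \<subseteq> N" and N: "hcompactin X N"
    using assms unfolding lc_space_def by blast
  define Y where "Y = subtopology X N"
  have "compact_space Y" "Hausdorff_space Y"
    using N compact_space_subtopology unfolding hcompactin_def Y_def by blast+
  then have base: "neighbourhood_base_of (compactin Y) Y"
    using compact_imp_locally_compact_space locally_compact_space_neighbourhood_base by blast
  have "openin Y (W \<inter> U)"
    unfolding Y_def openin_subtopology using W U by (intro exI[of _ "W \<inter> U"]) auto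
  then obtain V C where V: "openin Y V" "x \<in> V" "V \<subseteq> C" and C: "compactin Y C" "C \<subseteq> W \<inter> U"
    using base[unfolded neighbourhood_base_of, rule_format, of "W \<inter> U" x] W(2) U(2) by blast
  obtain G where G: "openin X G" "V = G \<inter> N"
    using V(1) unfolding Y_def openin_subtopology by blast
  have "V = G \<inter> U"
    using G(2) U(3) V(3) C(2) by blast
  then have "openin X V"
    using G(1) U(1) by (simp add: openin_Int)
  moreover have "compactin X C"
    using C(1) unfolding Y_def compactin_subtopology by blast
  ultimately show ?thesis
    using V(2,3) C(2) by blast
qed

lemma HX_top_separation:
  assumes "lc_space X" "S \<in> HX X" "T \<in> HX X" "x \<in> S" "x \<notin> T"
  shows "\<exists>A B. openin (HX_top X) A \<and> openin (HX_top X) B \<and> S \<in> A \<and> T \<in> B \<and> disjnt A B"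
proof -
  have "openin X (topspace X - T)"
    using closedin_HX[OF lc_space_Hausdorff_neighbourhood[OF assms(1)] assms(3)]
    by (simp add: closedin_def)
  moreover have "x \<in> topspace X - T"
    using assms(2,4,5) by (auto simp: HX_def)
  ultimately obtain V Q where VQ: "openin X V" "compactin X Q" "x \<in> V" "V \<subseteq> Q" "Q \<subseteq> topspace X - T"
    by (metis lc_space_compact_neighbourhood[OF assms(1)])
  show ?thesis
  proof (intro exI conjI)
    show "openin (HX_top X) {R \<in> HX X. R \<inter> V \<noteq> {}}"
      using VQ(1) by (rule openin_HX_top_meeting)
    show "openin (HX_top X) {R \<in> HX X. R \<inter> Q = {}}"
      using VQ(2) by (rule openin_HX_top_missing)
    show "S \<in> {R \<in> HX X. R \<inter> V \<noteq> {}}"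
      using assms(2,4) VQ(3) by blast
    show "T \<in> {R \<in> HX X. R \<inter> Q = {}}"
      using assms(3) VQ(5) by blast
    show "disjnt {R \<in> HX X. R \<inter> V \<noteq> {}} {R \<in> HX X. R \<inter> Q = {}}"
      using VQ(4) by (auto simp: disjnt_def)
  qed
qed

lemma Hausdorff_space_HX_top:
  assumes "lc_space X"
  shows "Hausdorff_space (HX_top X)"
  unfolding Hausdorff_space_def topspace_HX_top
proof (intro allI impI, elim conjE)
  fix S T assume "S \<in> HX X" "T \<in> HX X" "S \<noteq> T"
  then consider x where "x \<in> S" "x \<notin> T" | x where "x \<in> T" "x \<notin> S" by blast
  then show "\<exists>A B. openin (HX_top X) A \<and> openin (HX_top X) B \<and> S \<in> A \<and> T \<in> B \<and> disjnt A B"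
  proof cases
    case 1
    then show ?thesis using HX_top_separation[OF assms \<open>S \<in> HX X\<close> \<open>T \<in> HX X\<close>] by blast
  next
    case 2
    then obtain A B where "openin (HX_top X) A" "openin (HX_top X) B" "T \<in> A" "S \<in> B" "disjnt A B"
      using HX_top_separation[OF assms \<open>T \<in> HX X\<close> \<open>S \<in> HX X\<close>] by blast
    then show ?thesis
      by (intro exI[of _ B] exI[of _ A]) (simp add: disjnt_sym)
  qed
qed

lemma hcompactin_HX_meeting:
  assumes "lc_space X" "compactin X K"
  shows "hcompactin (HX_top X) {S \<in> HX X. S \<inter> K \<noteq> {}}"
  using compactin_HX_meeting[OF assms(2)] Hausdorff_space_subtopology[OF Hausdorff_space_HX_top[OF assms(1)]]
  by (simp add: hcompactin_def)

lemma lc_space_HX_top: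
  assumes "lc_space X"
  shows "lc_space (HX_top X)"
  unfolding lc_space_def topspace_HX_top
proof
  fix S assume S: "S \<in> HX X"
  then obtain x where x: "x \<in> S" "x \<in> topspace X"
    by (auto simp: HX_def)
  then obtain V Q where VQ: "openin X V" "compactin X Q" "x \<in> V" "V \<subseteq> Q"
    using lc_space_compact_neighbourhood[OF assms openin_topspace x(2)] by blast
  show "\<exists>U N. openin (HX_top X) U \<and> S \<in> U \<and> U \<subseteq> N \<and> hcompactin (HX_top X) N"
  proof (intro exI conjI)
    show "openin (HX_top X) {R \<in> HX X. R \<inter> V \<noteq> {}}"
      using VQ(1) by (rule openin_HX_top_meeting)
    show "hcompactin (HX_top X) {R \<in> HX X. R \<inter> Q \<noteq> {}}"
      using assms VQ(2) by (rule hcompactin_HX_meeting)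
  qed (use S x VQ in auto)
qed

lemma sigma_compact_space_HX_top:
  assumes "lc_space X" "sigma_compact_space X"
  shows "sigma_compact_space (HX_top X)"
proof -
  from assms(2) obtain \<K> where "countable \<K> \<and> (\<forall>K\<in>\<K>. hcompactin X K) \<and> \<Union>\<K> = topspace X"
    unfolding sigma_compact_space_def ..
  then have \<K>: "countable \<K>" "\<forall>K\<in>\<K>. hcompactin X K" "\<Union>\<K> = topspace X"
    by blast+
  define meeting where "meeting K = {S \<in> HX X. S \<inter> K \<noteq> {}}" for K
  have "HX X \<subseteq> \<Union>(meeting ` \<K>)"
  proof
    fix S assume "S \<in> HX X"
    then obtain x where "x \<in> S" "x \<in> topspace X"
      by (auto simp: HX_def)
    with \<K>(3) obtain K where "K \<in> \<K>" "x \<in> K"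
      by blast
    with \<open>S \<in> HX X\<close> \<open>x \<in> S\<close> show "S \<in> \<Union>(meeting ` \<K>)"
      by (auto simp: meeting_def)
  qed
  then have "\<Union>(meeting ` \<K>) = HX X"
    by (auto simp: meeting_def)
  moreover have "hcompactin (HX_top X) (meeting K)" if "K \<in> \<K>" for K
    using hcompactin_HX_meeting[OF assms(1)] \<K>(2) that by (simp add: meeting_def hcompactin_def)
  ultimately show ?thesis
    unfolding sigma_compact_space_def topspace_HX_top
    using \<K>(1) by (intro exI[of _ "meeting ` \<K>"]) auto
qed

theorem proposition3p7:
  fixes X :: "'a topology" and K :: "'a set"
  assumes "lc_space X" and "compactin X K"
  shows "hcompactin (HX_top X) {S \<in> HX X. S \<inter> K \<noteq> {}} \<and>
         lc_space (HX_top X) \<and>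
         (sigma_compact_space X \<longrightarrow> sigma_compact_space (HX_top X))"
  using hcompactin_HX_meeting[OF assms] lc_space_HX_top[OF assms(1)]
    sigma_compact_space_HX_top[OF assms(1)]
  by blast

end
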